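(* Let $G$ be a finite simple graph. If $G$ is not a cover graph, then the direct product $G \times G$ is not a cover graph.
   Context: A graph is a cover graph if it is the underlying (undirected) graph of the Hasse diagram of some finite partially ordered set. The direct product $G \times H$ has vertex set $V(G)\times V(H)$, with $(g_i,h_s)$ adjacent to $(g_j,h_t)$ if and only if $g_ig_j \in E(G)$ and $h_sh_t \in E(H)$. *)

theory Defs
  imports Main
begin

definition simple_graph :: "'a set \<Rightarrow> ('a \<Rightarrow> 'a \<Rightarrow> bool) \<Rightarrow> bool" where
  "simple_graph V E \<longleftrightarrow>
     (\<forall>x y. E x y \<longrightarrow> x \<in> V \<and> y \<in> V) \<and>
     (\<forall>x y. E x y \<longrightarrow> E y x) \<and>
     (\<forall>x. \<not> E x x)"

definition strict_partial_order_on :: "'a set \<Rightarrow> ('a \<Rightarrow> 'a \<Rightarrow> bool) \<Rightarrow> bool" where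
  "strict_partial_order_on V lt \<longleftrightarrow>
     (\<forall>x\<in>V. \<not> lt x x) \<and>
     (\<forall>x\<in>V. \<forall>y\<in>V. \<forall>z\<in>V. lt x y \<longrightarrow> lt y z \<longrightarrow> lt x z)"

definition covers :: "'a set \<Rightarrow> ('a \<Rightarrow> 'a \<Rightarrow> bool) \<Rightarrow> 'a \<Rightarrow> 'a \<Rightarrow> bool" where
  "covers V lt x y \<longleftrightarrow> x \<in> V \<and> y \<in> V \<and> lt x y \<and> \<not> (\<exists>z\<in>V. lt x z \<and> lt z y)"

definition cover_graph :: "'a set \<Rightarrow> ('a \<Rightarrow> 'a \<Rightarrow> bool) \<Rightarrow> bool" where
  "cover_graph V E \<longleftrightarrow>
     (\<exists>lt. strict_partial_order_on V lt \<and>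
        (\<forall>x\<in>V. \<forall>y\<in>V. E x y \<longleftrightarrow> covers V lt x y \<or> covers V lt y x))"

definition direct_prod_edges ::
  "('a \<Rightarrow> 'a \<Rightarrow> bool) \<Rightarrow> ('b \<Rightarrow> 'b \<Rightarrow> bool) \<Rightarrow> ('a \<times> 'b) \<Rightarrow> ('a \<times> 'b) \<Rightarrow> bool" where
  "direct_prod_edges E F p q \<longleftrightarrow> E (fst p) (fst q) \<and> F (snd p) (snd q)"

end

theory Submission
  imports Defs
begin

text \<open>The diagonal \<open>x \<mapsto> (x, x)\<close> sends every edge of \<open>G\<close> to an edge of \<open>G \<times> G\<close>,
  i.e.\ to a covering pair of any poset realising \<open>G \<times> G\<close>. Orienting each edge of \<open>G\<close>
  upwards along that poset and taking the transitive closure gives a partial order on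
  \<open>V\<close> whose covering pairs are exactly the oriented edges: a path of length at least two
  from \<open>a\<close> to \<open>b\<close> would put a diagonal element strictly between \<open>(a, a)\<close> and \<open>(b, b)\<close>.\<close>

definition upward_edges ::
  "('a \<Rightarrow> 'a \<Rightarrow> bool) \<Rightarrow> ('b \<Rightarrow> 'b \<Rightarrow> bool) \<Rightarrow> ('a \<Rightarrow> 'b) \<Rightarrow> 'a \<Rightarrow> 'a \<Rightarrow> bool" where
  "upward_edges E lt f u v \<longleftrightarrow> E u v \<and> lt (f u) (f v)"

lemma simple_graph_edge_in_vertices:
  "simple_graph V E \<Longrightarrow> E u v \<Longrightarrow> u \<in> V \<and> v \<in> V"
  unfolding simple_graph_def by blast

context
  fixes V :: "'a set" and E :: "'a \<Rightarrow> 'a \<Rightarrow> bool"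
    and W :: "'b set" and lt :: "'b \<Rightarrow> 'b \<Rightarrow> bool" and f :: "'a \<Rightarrow> 'b"
  assumes graph: "simple_graph V E"
    and order: "strict_partial_order_on W lt"
    and maps_to: "f ` V \<subseteq> W"
begin

private abbreviation "R \<equiv> upward_edges E lt f"

lemma tranclp_upward_edges_less:
  assumes "R\<^sup>+\<^sup>+ u v"
  shows "lt (f u) (f v) \<and> u \<in> V \<and> v \<in> V"
  using assms
proof (induction rule: tranclp_induct)
  case (base v)
  then show ?case using simple_graph_edge_in_vertices[OF graph] unfolding upward_edges_def by blast
next
  case (step v w)
  then have "lt (f v) (f w)" "w \<in> V"
    using simple_graph_edge_in_vertices[OF graph] unfolding upward_edges_def by blast+
  with step.IH order maps_to show ?case
    unfolding strict_partial_order_on_def by blast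
qed

lemma strict_partial_order_on_tranclp_upward_edges:
  "strict_partial_order_on V R\<^sup>+\<^sup>+"
  using tranclp_upward_edges_less order maps_to
  unfolding strict_partial_order_on_def by (blast intro: tranclp_trans)

context
  assumes edges_cover: "\<And>x y. E x y \<Longrightarrow> covers W lt (f x) (f y) \<or> covers W lt (f y) (f x)"
begin

lemma covers_tranclp_upward_edges_iff: "covers V R\<^sup>+\<^sup>+ a b \<longleftrightarrow> R a b"
proof
  assume cov: "covers V R\<^sup>+\<^sup>+ a b"
  then have "R\<^sup>+\<^sup>+ a b" unfolding covers_def by blast
  then show "R a b"
  proof (cases rule: tranclp.cases)
    case (trancl_into_trancl z)
    then have "z \<in> V" using tranclp_upward_edges_less by blast
    with trancl_into_trancl cov show ?thesis unfolding covers_def by blast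
  qed
next
  assume R: "R a b"
  then have ab: "E a b" "lt (f a) (f b)" unfolding upward_edges_def by blast+
  have "covers W lt (f a) (f b)"
    using edges_cover[OF ab(1)] ab(2) order maps_to simple_graph_edge_in_vertices[OF graph ab(1)]
    unfolding covers_def strict_partial_order_on_def by blast
  then have no_between: "\<not> (\<exists>z\<in>V. R\<^sup>+\<^sup>+ a z \<and> R\<^sup>+\<^sup>+ z b)"
    using tranclp_upward_edges_less maps_to unfolding covers_def by blast
  with R simple_graph_edge_in_vertices[OF graph ab(1)] show "covers V R\<^sup>+\<^sup>+ a b"
    unfolding covers_def by blast
qed

lemma cover_graph_if_edges_map_to_covers: "cover_graph V E"
  unfolding cover_graph_def
proof (intro exI conjI ballI)
  show "strict_partial_order_on V R\<^sup>+\<^sup>+"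
    by (rule strict_partial_order_on_tranclp_upward_edges)
next
  fix x y
  have "E y x \<longleftrightarrow> E x y" using graph unfolding simple_graph_def by blast
  moreover have "E x y \<Longrightarrow> lt (f x) (f y) \<or> lt (f y) (f x)"
    using edges_cover unfolding covers_def by blast
  ultimately show "E x y \<longleftrightarrow> covers V R\<^sup>+\<^sup>+ x y \<or> covers V R\<^sup>+\<^sup>+ y x"
    unfolding covers_tranclp_upward_edges_iff upward_edges_def by blast
qed

end

end

theorem corollary5:
  fixes V :: "'a set" and E :: "'a \<Rightarrow> 'a \<Rightarrow> bool"
  assumes "finite V" and "simple_graph V E"
    and "\<not> cover_graph V E"
  shows "\<not> cover_graph (V \<times> V) (direct_prod_edges E E)"
proof
  assume "cover_graph (V \<times> V) (direct_prod_edges E E)"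
  then obtain lt where order: "strict_partial_order_on (V \<times> V) lt"
    and edges: "\<forall>p\<in>V \<times> V. \<forall>q\<in>V \<times> V. direct_prod_edges E E p q \<longleftrightarrow>
                  covers (V \<times> V) lt p q \<or> covers (V \<times> V) lt q p"
    unfolding cover_graph_def by blast
  have "covers (V \<times> V) lt (x, x) (y, y) \<or> covers (V \<times> V) lt (y, y) (x, x)"
    if "E x y" for x y
    using edges simple_graph_edge_in_vertices[OF assms(2) that] that
    unfolding direct_prod_edges_def by auto
  then have "cover_graph V E"
    using cover_graph_if_edges_map_to_covers[OF assms(2) order, of "\<lambda>x. (x, x)"] by auto
  with assms(3) show False ..
qed

end
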